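(* Let $\mathcal C$ be a pointed category with finite coproducts and $B\colon\mathcal C\times\mathcal C\to Ab$ a bireduced bifunctor, and let $\Delta\colon\mathcal C\to\mathcal C\times\mathcal C$ be the diagonal functor. Then $T_2(B\circ\Delta)\cong(T_{11}B)\circ\Delta$; more precisely, the natural map $B\Delta\to(T_{11}B)\Delta$ induced by $t_{11}$ factors through $t_2\colon B\Delta\to T_2(B\Delta)$, and the resulting map $T_2(B\Delta)\to(T_{11}B)\Delta$ is a natural isomorphism.
   Context: Notation. $\vee$ is the coproduct, $r_k$ are the retractions of a coproduct, and $\nabla^n\colon X^{\vee n}\to X$ is the folding map. Functors and cross-effects. - A bifunctor $B$ is bireduced if $B(X,0)=B(0,Y)=0$. - For a reduced functor $F\colon\mathcal C\to Ab$: $cr_2F(X,Y)=\ker(F(X\vee Y)\to F(X)\oplus F(Y))$ and $cr_3F(X,Y,Z)=cr_2(cr_2F(-,Z))(X,Y)$. - $T_2F(X)=\mathrm{coker}\big(cr_3F(X,X,X)\subseteq F(X^{\vee3})\xrightarrow{F(\nabla^3)}F(X)\big)$, with projection $t_2$. - $T_{11}B(X,Y)=B(X,Y)/(N_1+N_2)$, where $N_1$ is the image of $cr_2(B(-,Y))(X,X)\subseteq B(X\vee X,Y)$ under $B(\nabla^2,1)$ and $N_2$ the image of $cr_2(B(X,-))(Y,Y)$ under $B(1,\nabla^2)$; $t_{11}$ is the projection. *)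

theory Defs
  imports "HOL-Algebra.Coset"
begin

(* Cmp C g f is the composite  g o f  (first f, then g). *)
record ('o,'m) category =
  Obj   :: "'o set"
  Hom   :: "'o \<Rightarrow> 'o \<Rightarrow> 'm set"
  Cmp   :: "'m \<Rightarrow> 'm \<Rightarrow> 'm"
  Ident :: "'o \<Rightarrow> 'm"

(* Zero: the zero object; Cop X Y = X \<or> Y with injections In1, In2;
   Copair X Y f g : X \<or> Y \<rightarrow> Z for f : X \<rightarrow> Z, g : Y \<rightarrow> Z. *)
record ('o,'m) pcc = "('o,'m) category" +
  Zero   :: "'o"
  Cop    :: "'o \<Rightarrow> 'o \<Rightarrow> 'o"
  In1    :: "'o \<Rightarrow> 'o \<Rightarrow> 'm"
  In2    :: "'o \<Rightarrow> 'o \<Rightarrow> 'm"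
  Copair :: "'o \<Rightarrow> 'o \<Rightarrow> 'm \<Rightarrow> 'm \<Rightarrow> 'm"

definition is_category :: "('o,'m,'x) category_scheme \<Rightarrow> bool" where
  "is_category C \<longleftrightarrow>
     (\<forall>X\<in>Obj C. Ident C X \<in> Hom C X X) \<and>
     (\<forall>X\<in>Obj C. \<forall>Y\<in>Obj C. \<forall>Z\<in>Obj C. \<forall>f\<in>Hom C X Y. \<forall>g\<in>Hom C Y Z.
         Cmp C g f \<in> Hom C X Z) \<and>
     (\<forall>X\<in>Obj C. \<forall>Y\<in>Obj C. \<forall>f\<in>Hom C X Y.
         Cmp C (Ident C Y) f = f \<and> Cmp C f (Ident C X) = f) \<and>
     (\<forall>W\<in>Obj C. \<forall>X\<in>Obj C. \<forall>Y\<in>Obj C. \<forall>Z\<in>Obj C.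
        \<forall>f\<in>Hom C W X. \<forall>g\<in>Hom C X Y. \<forall>h\<in>Hom C Y Z.
         Cmp C h (Cmp C g f) = Cmp C (Cmp C h g) f)"

definition pointed_cat_fin_coprod :: "('o,'m) pcc \<Rightarrow> bool" where
  "pointed_cat_fin_coprod C \<longleftrightarrow>
     is_category C \<and>
     Zero C \<in> Obj C \<and>
     (\<forall>X\<in>Obj C. \<exists>!f. f \<in> Hom C (Zero C) X) \<and>
     (\<forall>X\<in>Obj C. \<exists>!f. f \<in> Hom C X (Zero C)) \<and>
     (\<forall>X\<in>Obj C. \<forall>Y\<in>Obj C.
        Cop C X Y \<in> Obj C \<and>
        In1 C X Y \<in> Hom C X (Cop C X Y) \<and>
        In2 C X Y \<in> Hom C Y (Cop C X Y) \<and>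
        (\<forall>Z\<in>Obj C. \<forall>f\<in>Hom C X Z. \<forall>g\<in>Hom C Y Z.
           Copair C X Y f g \<in> Hom C (Cop C X Y) Z \<and>
           Cmp C (Copair C X Y f g) (In1 C X Y) = f \<and>
           Cmp C (Copair C X Y f g) (In2 C X Y) = g \<and>
           (\<forall>h\<in>Hom C (Cop C X Y) Z.
              Cmp C h (In1 C X Y) = f \<and> Cmp C h (In2 C X Y) = g \<longrightarrow>
              h = Copair C X Y f g)))"

definition zero_mor :: "('o,'m) pcc \<Rightarrow> 'o \<Rightarrow> 'o \<Rightarrow> 'm" where
  "zero_mor C X Y =
     Cmp C (THE f. f \<in> Hom C (Zero C) Y) (THE f. f \<in> Hom C X (Zero C))"

definition retr1 :: "('o,'m) pcc \<Rightarrow> 'o \<Rightarrow> 'o \<Rightarrow> 'm" where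
  "retr1 C X Y = Copair C X Y (Ident C X) (zero_mor C Y X)"

definition retr2 :: "('o,'m) pcc \<Rightarrow> 'o \<Rightarrow> 'o \<Rightarrow> 'm" where
  "retr2 C X Y = Copair C X Y (zero_mor C X Y) (Ident C Y)"

definition fold2 :: "('o,'m) pcc \<Rightarrow> 'o \<Rightarrow> 'm" where
  "fold2 C X = Copair C X X (Ident C X) (Ident C X)"

definition cube :: "('o,'m) pcc \<Rightarrow> 'o \<Rightarrow> 'o" where
  "cube C X = Cop C (Cop C X X) X"

definition fold3 :: "('o,'m) pcc \<Rightarrow> 'o \<Rightarrow> 'm" where
  "fold3 C X = Copair C (Cop C X X) X (fold2 C X) (Ident C X)"

definition copmap :: "('o,'m) pcc \<Rightarrow> 'o \<Rightarrow> 'o \<Rightarrow> 'o \<Rightarrow> 'o \<Rightarrow> 'm \<Rightarrow> 'm \<Rightarrow> 'm" where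
  "copmap C X Y X' Y' f g =
     Copair C X Y (Cmp C (In1 C X' Y') f) (Cmp C (In2 C X' Y') g)"

definition ab_functor ::
  "('o,'m) pcc \<Rightarrow> ('o \<Rightarrow> 'g monoid) \<Rightarrow> ('o \<Rightarrow> 'o \<Rightarrow> 'm \<Rightarrow> 'g \<Rightarrow> 'g) \<Rightarrow> bool" where
  "ab_functor C FO FM \<longleftrightarrow>
     (\<forall>X\<in>Obj C. comm_group (FO X)) \<and>
     (\<forall>X\<in>Obj C. \<forall>Y\<in>Obj C. \<forall>f\<in>Hom C X Y. FM X Y f \<in> hom (FO X) (FO Y)) \<and>
     (\<forall>X\<in>Obj C. \<forall>a\<in>carrier (FO X). FM X X (Ident C X) a = a) \<and>
     (\<forall>X\<in>Obj C. \<forall>Y\<in>Obj C. \<forall>Z\<in>Obj C. \<forall>f\<in>Hom C X Y. \<forall>g\<in>Hom C Y Z.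
        \<forall>a\<in>carrier (FO X). FM X Z (Cmp C g f) a = FM Y Z g (FM X Y f a))"

definition ab_bifunctor ::
  "('o,'m) pcc \<Rightarrow> ('o \<Rightarrow> 'o \<Rightarrow> 'g monoid)
     \<Rightarrow> ('o \<Rightarrow> 'o \<Rightarrow> 'o \<Rightarrow> 'o \<Rightarrow> 'm \<Rightarrow> 'm \<Rightarrow> 'g \<Rightarrow> 'g) \<Rightarrow> bool" where
  "ab_bifunctor C BO BM \<longleftrightarrow>
     (\<forall>X\<in>Obj C. \<forall>Y\<in>Obj C. comm_group (BO X Y)) \<and>
     (\<forall>X\<in>Obj C. \<forall>Y\<in>Obj C. \<forall>X'\<in>Obj C. \<forall>Y'\<in>Obj C.
        \<forall>f\<in>Hom C X X'. \<forall>g\<in>Hom C Y Y'.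
          BM X Y X' Y' f g \<in> hom (BO X Y) (BO X' Y')) \<and>
     (\<forall>X\<in>Obj C. \<forall>Y\<in>Obj C. \<forall>a\<in>carrier (BO X Y).
        BM X Y X Y (Ident C X) (Ident C Y) a = a) \<and>
     (\<forall>X\<in>Obj C. \<forall>Y\<in>Obj C. \<forall>X'\<in>Obj C. \<forall>Y'\<in>Obj C. \<forall>X''\<in>Obj C. \<forall>Y''\<in>Obj C.
        \<forall>f\<in>Hom C X X'. \<forall>g\<in>Hom C Y Y'. \<forall>f'\<in>Hom C X' X''. \<forall>g'\<in>Hom C Y' Y''.
        \<forall>a\<in>carrier (BO X Y).
          BM X Y X'' Y'' (Cmp C f' f) (Cmp C g' g) a
            = BM X' Y' X'' Y'' f' g' (BM X Y X' Y' f g a))"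

definition bireduced :: "('o,'m) pcc \<Rightarrow> ('o \<Rightarrow> 'o \<Rightarrow> 'g monoid) \<Rightarrow> bool" where
  "bireduced C BO \<longleftrightarrow>
     (\<forall>X\<in>Obj C. carrier (BO X (Zero C)) = {one (BO X (Zero C))} \<and>
                carrier (BO (Zero C) X) = {one (BO (Zero C) X)})"

definition diagO :: "('o \<Rightarrow> 'o \<Rightarrow> 'g monoid) \<Rightarrow> 'o \<Rightarrow> 'g monoid" where
  "diagO BO = (\<lambda>X. BO X X)"

definition diagM ::
  "('o \<Rightarrow> 'o \<Rightarrow> 'o \<Rightarrow> 'o \<Rightarrow> 'm \<Rightarrow> 'm \<Rightarrow> 'g \<Rightarrow> 'g) \<Rightarrow> 'o \<Rightarrow> 'o \<Rightarrow> 'm \<Rightarrow> 'g \<Rightarrow> 'g" where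
  "diagM BM = (\<lambda>X Y f. BM X X Y Y f f)"

definition cr2 ::
  "('o,'m) pcc \<Rightarrow> ('o \<Rightarrow> 'g monoid) \<Rightarrow> ('o \<Rightarrow> 'o \<Rightarrow> 'm \<Rightarrow> 'g \<Rightarrow> 'g) \<Rightarrow> 'o \<Rightarrow> 'o \<Rightarrow> 'g set" where
  "cr2 C FO FM X Y =
     {a \<in> carrier (FO (Cop C X Y)).
        FM (Cop C X Y) X (retr1 C X Y) a = one (FO X) \<and>
        FM (Cop C X Y) Y (retr2 C X Y) a = one (FO Y)}"

(* the functor W \<mapsto> cr_2 F(W,Z) (subgroup of F(W \<or> Z)), with maps F(f \<or> 1_Z) *)
definition cr2_obj ::
  "('o,'m) pcc \<Rightarrow> ('o \<Rightarrow> 'g monoid) \<Rightarrow> ('o \<Rightarrow> 'o \<Rightarrow> 'm \<Rightarrow> 'g \<Rightarrow> 'g) \<Rightarrow> 'o \<Rightarrow> 'o \<Rightarrow> 'g monoid" where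
  "cr2_obj C FO FM Z W = (FO (Cop C W Z))\<lparr>carrier := cr2 C FO FM W Z\<rparr>"

definition cr2_mor ::
  "('o,'m) pcc \<Rightarrow> ('o \<Rightarrow> 'o \<Rightarrow> 'm \<Rightarrow> 'g \<Rightarrow> 'g) \<Rightarrow> 'o \<Rightarrow> 'o \<Rightarrow> 'o \<Rightarrow> 'm \<Rightarrow> 'g \<Rightarrow> 'g" where
  "cr2_mor C FM Z W W' f = FM (Cop C W Z) (Cop C W' Z) (copmap C W Z W' Z f (Ident C Z))"

definition cr3 ::
  "('o,'m) pcc \<Rightarrow> ('o \<Rightarrow> 'g monoid) \<Rightarrow> ('o \<Rightarrow> 'o \<Rightarrow> 'm \<Rightarrow> 'g \<Rightarrow> 'g) \<Rightarrow> 'o \<Rightarrow> 'o \<Rightarrow> 'o \<Rightarrow> 'g set" where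
  "cr3 C FO FM X Y Z = cr2 C (cr2_obj C FO FM Z) (cr2_mor C FM Z) X Y"

definition K2 ::
  "('o,'m) pcc \<Rightarrow> ('o \<Rightarrow> 'g monoid) \<Rightarrow> ('o \<Rightarrow> 'o \<Rightarrow> 'm \<Rightarrow> 'g \<Rightarrow> 'g) \<Rightarrow> 'o \<Rightarrow> 'g set" where
  "K2 C FO FM X = FM (cube C X) X (fold3 C X) ` cr3 C FO FM X X X"

definition T2 ::
  "('o,'m) pcc \<Rightarrow> ('o \<Rightarrow> 'g monoid) \<Rightarrow> ('o \<Rightarrow> 'o \<Rightarrow> 'm \<Rightarrow> 'g \<Rightarrow> 'g) \<Rightarrow> 'o \<Rightarrow> 'g set monoid" where
  "T2 C FO FM X = FO X Mod K2 C FO FM X"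

definition t2 ::
  "('o,'m) pcc \<Rightarrow> ('o \<Rightarrow> 'g monoid) \<Rightarrow> ('o \<Rightarrow> 'o \<Rightarrow> 'm \<Rightarrow> 'g \<Rightarrow> 'g) \<Rightarrow> 'o \<Rightarrow> 'g \<Rightarrow> 'g set" where
  "t2 C FO FM X a = r_coset (FO X) (K2 C FO FM X) a"

definition T2_mor ::
  "('o,'m) pcc \<Rightarrow> ('o \<Rightarrow> 'g monoid) \<Rightarrow> ('o \<Rightarrow> 'o \<Rightarrow> 'm \<Rightarrow> 'g \<Rightarrow> 'g)
     \<Rightarrow> 'o \<Rightarrow> 'o \<Rightarrow> 'm \<Rightarrow> 'g set \<Rightarrow> 'g set" where
  "T2_mor C FO FM X Y f K = t2 C FO FM Y (FM X Y f (SOME a. a \<in> K))"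

definition N1 ::
  "('o,'m) pcc \<Rightarrow> ('o \<Rightarrow> 'o \<Rightarrow> 'g monoid)
     \<Rightarrow> ('o \<Rightarrow> 'o \<Rightarrow> 'o \<Rightarrow> 'o \<Rightarrow> 'm \<Rightarrow> 'm \<Rightarrow> 'g \<Rightarrow> 'g) \<Rightarrow> 'o \<Rightarrow> 'o \<Rightarrow> 'g set" where
  "N1 C BO BM X Y =
     BM (Cop C X X) Y X Y (fold2 C X) (Ident C Y) `
       cr2 C (\<lambda>W. BO W Y) (\<lambda>W W' f. BM W Y W' Y f (Ident C Y)) X X"

definition N2 ::
  "('o,'m) pcc \<Rightarrow> ('o \<Rightarrow> 'o \<Rightarrow> 'g monoid)
     \<Rightarrow> ('o \<Rightarrow> 'o \<Rightarrow> 'o \<Rightarrow> 'o \<Rightarrow> 'm \<Rightarrow> 'm \<Rightarrow> 'g \<Rightarrow> 'g) \<Rightarrow> 'o \<Rightarrow> 'o \<Rightarrow> 'g set" where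
  "N2 C BO BM X Y =
     BM X (Cop C Y Y) X Y (Ident C X) (fold2 C Y) `
       cr2 C (\<lambda>W. BO X W) (\<lambda>W W' g. BM X W X W' (Ident C X) g) Y Y"

definition N12 ::
  "('o,'m) pcc \<Rightarrow> ('o \<Rightarrow> 'o \<Rightarrow> 'g monoid)
     \<Rightarrow> ('o \<Rightarrow> 'o \<Rightarrow> 'o \<Rightarrow> 'o \<Rightarrow> 'm \<Rightarrow> 'm \<Rightarrow> 'g \<Rightarrow> 'g) \<Rightarrow> 'o \<Rightarrow> 'o \<Rightarrow> 'g set" where
  "N12 C BO BM X Y = set_mult (BO X Y) (N1 C BO BM X Y) (N2 C BO BM X Y)"

definition T11 ::
  "('o,'m) pcc \<Rightarrow> ('o \<Rightarrow> 'o \<Rightarrow> 'g monoid)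
     \<Rightarrow> ('o \<Rightarrow> 'o \<Rightarrow> 'o \<Rightarrow> 'o \<Rightarrow> 'm \<Rightarrow> 'm \<Rightarrow> 'g \<Rightarrow> 'g) \<Rightarrow> 'o \<Rightarrow> 'o \<Rightarrow> 'g set monoid" where
  "T11 C BO BM X Y = BO X Y Mod N12 C BO BM X Y"

definition t11 ::
  "('o,'m) pcc \<Rightarrow> ('o \<Rightarrow> 'o \<Rightarrow> 'g monoid)
     \<Rightarrow> ('o \<Rightarrow> 'o \<Rightarrow> 'o \<Rightarrow> 'o \<Rightarrow> 'm \<Rightarrow> 'm \<Rightarrow> 'g \<Rightarrow> 'g) \<Rightarrow> 'o \<Rightarrow> 'o \<Rightarrow> 'g \<Rightarrow> 'g set" where
  "t11 C BO BM X Y a = r_coset (BO X Y) (N12 C BO BM X Y) a"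

definition T11_mor ::
  "('o,'m) pcc \<Rightarrow> ('o \<Rightarrow> 'o \<Rightarrow> 'g monoid)
     \<Rightarrow> ('o \<Rightarrow> 'o \<Rightarrow> 'o \<Rightarrow> 'o \<Rightarrow> 'm \<Rightarrow> 'm \<Rightarrow> 'g \<Rightarrow> 'g)
     \<Rightarrow> 'o \<Rightarrow> 'o \<Rightarrow> 'o \<Rightarrow> 'o \<Rightarrow> 'm \<Rightarrow> 'm \<Rightarrow> 'g set \<Rightarrow> 'g set" where
  "T11_mor C BO BM X Y X' Y' f g K = t11 C BO BM X' Y' (BM X Y X' Y' f g (SOME a. a \<in> K))"

end

theory Submission
  imports Defs
begin

text \<open>
  Both \<open>T\<^sub>2(B\<Delta>)(X)\<close> and \<open>T\<^sub>1\<^sub>1B(X,X)\<close> are quotients of \<open>B(X,X)\<close>, and we show that the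
  subgroups divided out coincide: \<open>K = \<nabla>\<^sup>3(cr\<^sub>3(B\<Delta>)(X,X,X))\<close> equals \<open>N\<^sub>1 + N\<^sub>2\<close>, so the
  identity is the required natural isomorphism.

  \<open>N\<^sub>1 \<subseteq> K\<close>: an element \<open>a\<close> of \<open>cr\<^sub>2(B(-,X))(X,X) \<subseteq> B(X\<or>X, X)\<close> is pushed along the two
  inclusions of \<open>X\<or>X\<close> and \<open>X\<close> into \<open>X\<^sup>\<or>\<^sup>3\<close>; bireducedness puts the result into \<open>cr\<^sub>3(B\<Delta>)\<close>,
  and \<open>\<nabla>\<^sup>3\<close> maps it to \<open>B(\<nabla>\<^sup>2,1)(a)\<close>. \<open>N\<^sub>2 \<subseteq> K\<close> follows by swapping the arguments of \<open>B\<close>.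

  \<open>K \<subseteq> N\<^sub>1 + N\<^sub>2\<close>: for a reduced functor \<open>F\<close>, \<open>F(\<nabla>\<^sup>3) = F(p\<^sub>1) + F(p\<^sub>2) + F(p\<^sub>3)\<close> modulo
  \<open>F(\<nabla>\<^sup>2)(cr\<^sub>2F(X,X))\<close>, where \<open>p\<^sub>i\<close> are the retractions of \<open>X\<^sup>\<or>\<^sup>3\<close>. Applying this to
  \<open>B(-,X)\<close> and then to \<open>B(X,-)\<close> gives \<open>B(\<nabla>\<^sup>3,\<nabla>\<^sup>3)(c) \<equiv> \<Sum>\<^sub>i\<^sub>,\<^sub>j B(p\<^sub>i,p\<^sub>j)(c)\<close> modulo
  \<open>N\<^sub>1 + N\<^sub>2\<close>, and for \<open>c \<in> cr\<^sub>3(B\<Delta>)(X,X,X)\<close> every term vanishes, since each pair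
  \<open>p\<^sub>i, p\<^sub>j\<close> factors through one of the three maps \<open>X\<^sup>\<or>\<^sup>3 \<rightarrow> X\<or>X\<close> defining \<open>cr\<^sub>3\<close>.
\<close>

locale pointed_category =
  fixes C :: "('o,'m) pcc"
  assumes pointed_cat_fin_coprod: "pointed_cat_fin_coprod C"
begin

lemma is_category: "is_category C"
  using pointed_cat_fin_coprod by (simp add: pointed_cat_fin_coprod_def)

lemma Ident_in_Hom [simp]: "X \<in> Obj C \<Longrightarrow> Ident C X \<in> Hom C X X"
  using is_category by (simp add: is_category_def)

lemma Cmp_in_Hom:
  "\<lbrakk>X \<in> Obj C; Y \<in> Obj C; Z \<in> Obj C; f \<in> Hom C X Y; g \<in> Hom C Y Z\<rbrakk> \<Longrightarrow> Cmp C g f \<in> Hom C X Z"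
  using is_category unfolding is_category_def by blast

lemma Cmp_Ident_left: "\<lbrakk>X \<in> Obj C; Y \<in> Obj C; f \<in> Hom C X Y\<rbrakk> \<Longrightarrow> Cmp C (Ident C Y) f = f"
  using is_category unfolding is_category_def by blast

lemma Cmp_Ident_right: "\<lbrakk>X \<in> Obj C; Y \<in> Obj C; f \<in> Hom C X Y\<rbrakk> \<Longrightarrow> Cmp C f (Ident C X) = f"
  using is_category unfolding is_category_def by blast

lemma Cmp_Ident_Ident [simp]: "X \<in> Obj C \<Longrightarrow> Cmp C (Ident C X) (Ident C X) = Ident C X"
  by (simp add: Cmp_Ident_left)

lemma Cmp_assoc:
  "\<lbrakk>W \<in> Obj C; X \<in> Obj C; Y \<in> Obj C; Z \<in> Obj C; f \<in> Hom C W X; g \<in> Hom C X Y; h \<in> Hom C Y Z\<rbrakk>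
   \<Longrightarrow> Cmp C h (Cmp C g f) = Cmp C (Cmp C h g) f"
  using is_category unfolding is_category_def by blast

lemma Zero_in_Obj [simp]: "Zero C \<in> Obj C"
  using pointed_cat_fin_coprod by (simp add: pointed_cat_fin_coprod_def)

lemma Cop_in_Obj [simp]: "\<lbrakk>X \<in> Obj C; Y \<in> Obj C\<rbrakk> \<Longrightarrow> Cop C X Y \<in> Obj C"
  using pointed_cat_fin_coprod by (simp add: pointed_cat_fin_coprod_def)

lemma In1_in_Hom [simp]: "\<lbrakk>X \<in> Obj C; Y \<in> Obj C\<rbrakk> \<Longrightarrow> In1 C X Y \<in> Hom C X (Cop C X Y)"
  using pointed_cat_fin_coprod by (simp add: pointed_cat_fin_coprod_def)

lemma In2_in_Hom [simp]: "\<lbrakk>X \<in> Obj C; Y \<in> Obj C\<rbrakk> \<Longrightarrow> In2 C X Y \<in> Hom C Y (Cop C X Y)"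
  using pointed_cat_fin_coprod by (simp add: pointed_cat_fin_coprod_def)

context
  fixes X Y Z f g
  assumes objs: "X \<in> Obj C" "Y \<in> Obj C" "Z \<in> Obj C" and f: "f \<in> Hom C X Z" and g: "g \<in> Hom C Y Z"
begin

lemma Copair_in_Hom: "Copair C X Y f g \<in> Hom C (Cop C X Y) Z"
  using pointed_cat_fin_coprod objs f g unfolding pointed_cat_fin_coprod_def by blast

lemma Copair_In1: "Cmp C (Copair C X Y f g) (In1 C X Y) = f"
  using pointed_cat_fin_coprod objs f g unfolding pointed_cat_fin_coprod_def by blast

lemma Copair_In2: "Cmp C (Copair C X Y f g) (In2 C X Y) = g"
  using pointed_cat_fin_coprod objs f g unfolding pointed_cat_fin_coprod_def by blast

lemma Copair_unique:
  "\<lbrakk>h \<in> Hom C (Cop C X Y) Z; Cmp C h (In1 C X Y) = f; Cmp C h (In2 C X Y) = g\<rbrakk> \<Longrightarrow> h = Copair C X Y f g"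
  using pointed_cat_fin_coprod objs f g unfolding pointed_cat_fin_coprod_def by blast

end

lemma Cmp_Copair:
  assumes "X \<in> Obj C" "Y \<in> Obj C" "Z \<in> Obj C" "W \<in> Obj C"
    and "f \<in> Hom C X Z" "g \<in> Hom C Y Z" "h \<in> Hom C Z W"
  shows "Cmp C h (Copair C X Y f g) = Copair C X Y (Cmp C h f) (Cmp C h g)"
proof (rule Copair_unique)
  have c: "Copair C X Y f g \<in> Hom C (Cop C X Y) Z"
    using assms by (simp add: Copair_in_Hom)
  then show "Cmp C h (Copair C X Y f g) \<in> Hom C (Cop C X Y) W"
    using assms Cmp_in_Hom[of "Cop C X Y" Z W] by simp
  show "Cmp C (Cmp C h (Copair C X Y f g)) (In1 C X Y) = Cmp C h f"
    using assms c by (simp add: Cmp_assoc[of X "Cop C X Y" Z W, symmetric] Copair_In1)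
  show "Cmp C (Cmp C h (Copair C X Y f g)) (In2 C X Y) = Cmp C h g"
    using assms c by (simp add: Cmp_assoc[of Y "Cop C X Y" Z W, symmetric] Copair_In2)
qed (use assms Cmp_in_Hom[of _ Z W] in auto)

definition from_Zero :: "'o \<Rightarrow> 'm" where
  "from_Zero Y = (THE f. f \<in> Hom C (Zero C) Y)"

definition to_Zero :: "'o \<Rightarrow> 'm" where
  "to_Zero X = (THE f. f \<in> Hom C X (Zero C))"

lemma Zero_initial: "Y \<in> Obj C \<Longrightarrow> \<exists>!f. f \<in> Hom C (Zero C) Y"
  using pointed_cat_fin_coprod by (simp add: pointed_cat_fin_coprod_def)

lemma Zero_terminal: "X \<in> Obj C \<Longrightarrow> \<exists>!f. f \<in> Hom C X (Zero C)"
  using pointed_cat_fin_coprod by (simp add: pointed_cat_fin_coprod_def)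

lemma from_Zero_in_Hom [simp]: "Y \<in> Obj C \<Longrightarrow> from_Zero Y \<in> Hom C (Zero C) Y"
  unfolding from_Zero_def by (rule theI'[OF Zero_initial])

lemma from_Zero_unique: "\<lbrakk>Y \<in> Obj C; f \<in> Hom C (Zero C) Y\<rbrakk> \<Longrightarrow> f = from_Zero Y"
  unfolding from_Zero_def by (rule the1_equality[OF Zero_initial, symmetric])

lemma to_Zero_in_Hom [simp]: "X \<in> Obj C \<Longrightarrow> to_Zero X \<in> Hom C X (Zero C)"
  unfolding to_Zero_def by (rule theI'[OF Zero_terminal])

lemma to_Zero_unique: "\<lbrakk>X \<in> Obj C; f \<in> Hom C X (Zero C)\<rbrakk> \<Longrightarrow> f = to_Zero X"
  unfolding to_Zero_def by (rule the1_equality[OF Zero_terminal, symmetric])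

lemma zero_mor_eq: "zero_mor C X Y = Cmp C (from_Zero Y) (to_Zero X)"
  by (simp add: zero_mor_def from_Zero_def to_Zero_def)

lemma zero_mor_in_Hom [simp]: "\<lbrakk>X \<in> Obj C; Y \<in> Obj C\<rbrakk> \<Longrightarrow> zero_mor C X Y \<in> Hom C X Y"
  unfolding zero_mor_eq by (rule Cmp_in_Hom[of X "Zero C" Y]) simp_all

lemma Cmp_zero_mor_left:
  assumes "X \<in> Obj C" "Y \<in> Obj C" "Z \<in> Obj C" "g \<in> Hom C Y Z"
  shows "Cmp C g (zero_mor C X Y) = zero_mor C X Z"
proof -
  have "Cmp C g (zero_mor C X Y) = Cmp C (Cmp C g (from_Zero Y)) (to_Zero X)"
    using assms by (simp add: zero_mor_eq Cmp_assoc[of X "Zero C" Y Z])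
  also have "Cmp C g (from_Zero Y) = from_Zero Z"
    using assms by (intro from_Zero_unique Cmp_in_Hom[of "Zero C" Y Z]) simp_all
  finally show ?thesis by (simp add: zero_mor_eq)
qed

lemma Cmp_zero_mor_right:
  assumes "X \<in> Obj C" "Y \<in> Obj C" "Z \<in> Obj C" "f \<in> Hom C X Y"
  shows "Cmp C (zero_mor C Y Z) f = zero_mor C X Z"
proof -
  have "Cmp C (zero_mor C Y Z) f = Cmp C (from_Zero Z) (Cmp C (to_Zero Y) f)"
    using assms by (simp add: zero_mor_eq Cmp_assoc[of X Y "Zero C" Z])
  also have "Cmp C (to_Zero Y) f = to_Zero X"
    using assms by (intro to_Zero_unique Cmp_in_Hom[of X Y "Zero C"]) simp_all
  finally show ?thesis by (simp add: zero_mor_eq)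
qed

lemma copmap_in_Hom [simp]:
  "\<lbrakk>X \<in> Obj C; Y \<in> Obj C; X' \<in> Obj C; Y' \<in> Obj C; f \<in> Hom C X X'; g \<in> Hom C Y Y'\<rbrakk>
   \<Longrightarrow> copmap C X Y X' Y' f g \<in> Hom C (Cop C X Y) (Cop C X' Y')"
  unfolding copmap_def
  by (intro Copair_in_Hom[of X Y "Cop C X' Y'"] Cmp_in_Hom[of X X' "Cop C X' Y'"] Cmp_in_Hom[of Y Y' "Cop C X' Y'"]) simp_all

lemma copmap_In1:
  "\<lbrakk>X \<in> Obj C; Y \<in> Obj C; X' \<in> Obj C; Y' \<in> Obj C; f \<in> Hom C X X'; g \<in> Hom C Y Y'\<rbrakk>
   \<Longrightarrow> Cmp C (copmap C X Y X' Y' f g) (In1 C X Y) = Cmp C (In1 C X' Y') f"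
  unfolding copmap_def
  by (intro Copair_In1[of X Y "Cop C X' Y'"] Cmp_in_Hom[of X X' "Cop C X' Y'"] Cmp_in_Hom[of Y Y' "Cop C X' Y'"]) simp_all

lemma copmap_In2:
  "\<lbrakk>X \<in> Obj C; Y \<in> Obj C; X' \<in> Obj C; Y' \<in> Obj C; f \<in> Hom C X X'; g \<in> Hom C Y Y'\<rbrakk>
   \<Longrightarrow> Cmp C (copmap C X Y X' Y' f g) (In2 C X Y) = Cmp C (In2 C X' Y') g"
  unfolding copmap_def
  by (intro Copair_In2[of X Y "Cop C X' Y'"] Cmp_in_Hom[of X X' "Cop C X' Y'"] Cmp_in_Hom[of Y Y' "Cop C X' Y'"]) simp_all

lemma Copair_Cmp_copmap:
  assumes "X \<in> Obj C" "Y \<in> Obj C" "X' \<in> Obj C" "Y' \<in> Obj C" "Z \<in> Obj C"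
    and "h \<in> Hom C X X'" "k \<in> Hom C Y Y'" "f \<in> Hom C X' Z" "g \<in> Hom C Y' Z"
  shows "Cmp C (Copair C X' Y' f g) (copmap C X Y X' Y' h k) = Copair C X Y (Cmp C f h) (Cmp C g k)"
proof -
  have fg: "Copair C X' Y' f g \<in> Hom C (Cop C X' Y') Z"
    using assms by (simp add: Copair_in_Hom)
  have "Cmp C (Copair C X' Y' f g) (copmap C X Y X' Y' h k)
      = Copair C X Y (Cmp C (Copair C X' Y' f g) (Cmp C (In1 C X' Y') h))
                     (Cmp C (Copair C X' Y' f g) (Cmp C (In2 C X' Y') k))"
    unfolding copmap_def using assms fg
    by (intro Cmp_Copair[where Z = "Cop C X' Y'" and W = Z])
       (simp_all add: Cmp_in_Hom[of X X' "Cop C X' Y'"] Cmp_in_Hom[of Y Y' "Cop C X' Y'"])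
  also have "\<dots> = Copair C X Y (Cmp C f h) (Cmp C g k)"
    using assms fg
    by (simp add: Cmp_assoc[of X X' "Cop C X' Y'" Z] Cmp_assoc[of Y Y' "Cop C X' Y'" Z]
        Copair_In1[of X' Y' Z f g] Copair_In2[of X' Y' Z f g])
  finally show ?thesis .
qed

lemma retr1_in_Hom [simp]: "\<lbrakk>X \<in> Obj C; Y \<in> Obj C\<rbrakk> \<Longrightarrow> retr1 C X Y \<in> Hom C (Cop C X Y) X"
  unfolding retr1_def by (rule Copair_in_Hom) simp_all

lemma retr2_in_Hom [simp]: "\<lbrakk>X \<in> Obj C; Y \<in> Obj C\<rbrakk> \<Longrightarrow> retr2 C X Y \<in> Hom C (Cop C X Y) Y"
  unfolding retr2_def by (rule Copair_in_Hom) simp_all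

lemma fold2_in_Hom [simp]: "X \<in> Obj C \<Longrightarrow> fold2 C X \<in> Hom C (Cop C X X) X"
  unfolding fold2_def by (rule Copair_in_Hom) simp_all

lemma fold3_in_Hom [simp]: "X \<in> Obj C \<Longrightarrow> fold3 C X \<in> Hom C (Cop C (Cop C X X) X) X"
  unfolding fold3_def by (rule Copair_in_Hom) simp_all

lemma retr1_In1: "\<lbrakk>X \<in> Obj C; Y \<in> Obj C\<rbrakk> \<Longrightarrow> Cmp C (retr1 C X Y) (In1 C X Y) = Ident C X"
  unfolding retr1_def by (rule Copair_In1[of X Y X]) simp_all

lemma retr1_In2: "\<lbrakk>X \<in> Obj C; Y \<in> Obj C\<rbrakk> \<Longrightarrow> Cmp C (retr1 C X Y) (In2 C X Y) = zero_mor C Y X"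
  unfolding retr1_def by (rule Copair_In2[of X Y X]) simp_all

lemma retr2_In1: "\<lbrakk>X \<in> Obj C; Y \<in> Obj C\<rbrakk> \<Longrightarrow> Cmp C (retr2 C X Y) (In1 C X Y) = zero_mor C X Y"
  unfolding retr2_def by (rule Copair_In1[of X Y Y]) simp_all

lemma retr2_In2: "\<lbrakk>X \<in> Obj C; Y \<in> Obj C\<rbrakk> \<Longrightarrow> Cmp C (retr2 C X Y) (In2 C X Y) = Ident C Y"
  unfolding retr2_def by (rule Copair_In2[of X Y Y]) simp_all

lemma fold2_In1: "X \<in> Obj C \<Longrightarrow> Cmp C (fold2 C X) (In1 C X X) = Ident C X"
  unfolding fold2_def by (rule Copair_In1[of X X X]) simp_all

lemma fold2_In2: "X \<in> Obj C \<Longrightarrow> Cmp C (fold2 C X) (In2 C X X) = Ident C X"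
  unfolding fold2_def by (rule Copair_In2[of X X X]) simp_all

lemma fold3_In1: "X \<in> Obj C \<Longrightarrow> Cmp C (fold3 C X) (In1 C (Cop C X X) X) = fold2 C X"
  unfolding fold3_def by (rule Copair_In1[of "Cop C X X" X X]) simp_all

lemma fold3_In2: "X \<in> Obj C \<Longrightarrow> Cmp C (fold3 C X) (In2 C (Cop C X X) X) = Ident C X"
  unfolding fold3_def by (rule Copair_In2[of "Cop C X X" X X]) simp_all

lemma retr1_copmap:
  assumes "X \<in> Obj C" "Y \<in> Obj C" "X' \<in> Obj C" "Y' \<in> Obj C" "f \<in> Hom C X X'" "g \<in> Hom C Y Y'"
  shows "Cmp C (retr1 C X' Y') (copmap C X Y X' Y' f g) = Cmp C f (retr1 C X Y)"
proof -
  have "Cmp C (retr1 C X' Y') (copmap C X Y X' Y' f g)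
      = Copair C X Y (Cmp C (Ident C X') f) (Cmp C (zero_mor C Y' X') g)"
    unfolding retr1_def using assms by (intro Copair_Cmp_copmap[where Z = X']) simp_all
  also have "\<dots> = Copair C X Y (Cmp C f (Ident C X)) (Cmp C f (zero_mor C Y X))"
    using assms by (simp add: Cmp_Ident_left Cmp_Ident_right Cmp_zero_mor_left Cmp_zero_mor_right)
  also have "\<dots> = Cmp C f (retr1 C X Y)"
    unfolding retr1_def using assms by (intro Cmp_Copair[where Z = X, symmetric]) simp_all
  finally show ?thesis .
qed

lemma retr2_copmap:
  assumes "X \<in> Obj C" "Y \<in> Obj C" "X' \<in> Obj C" "Y' \<in> Obj C" "f \<in> Hom C X X'" "g \<in> Hom C Y Y'"
  shows "Cmp C (retr2 C X' Y') (copmap C X Y X' Y' f g) = Cmp C g (retr2 C X Y)"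
proof -
  have "Cmp C (retr2 C X' Y') (copmap C X Y X' Y' f g)
      = Copair C X Y (Cmp C (zero_mor C X' Y') f) (Cmp C (Ident C Y') g)"
    unfolding retr2_def using assms by (intro Copair_Cmp_copmap[where Z = Y']) simp_all
  also have "\<dots> = Copair C X Y (Cmp C g (zero_mor C X Y)) (Cmp C g (Ident C Y))"
    using assms by (simp add: Cmp_Ident_left Cmp_Ident_right Cmp_zero_mor_left Cmp_zero_mor_right)
  also have "\<dots> = Cmp C g (retr2 C X Y)"
    unfolding retr2_def using assms by (intro Cmp_Copair[where Z = Y, symmetric]) simp_all
  finally show ?thesis .
qed

lemma fold3_eq:
  assumes "X \<in> Obj C"
  shows "fold3 C X = Cmp C (fold2 C X) (copmap C (Cop C X X) X X X (fold2 C X) (Ident C X))"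
proof -
  have "Cmp C (fold2 C X) (copmap C (Cop C X X) X X X (fold2 C X) (Ident C X))
      = Copair C (Cop C X X) X (Cmp C (Ident C X) (fold2 C X)) (Cmp C (Ident C X) (Ident C X))"
    unfolding fold2_def using assms by (intro Copair_Cmp_copmap[where Z = X]) (simp_all add: Copair_in_Hom)
  then show ?thesis
    using assms Cmp_Ident_left[of "Cop C X X" X "fold2 C X"] Cmp_Ident_left[of X X "Ident C X"]
    by (simp add: fold3_def)
qed

abbreviation cop3 :: "'o \<Rightarrow> 'o" where
  "cop3 X \<equiv> Cop C (Cop C X X) X"

abbreviation proj3_1 :: "'o \<Rightarrow> 'm" where
  "proj3_1 X \<equiv> Cmp C (retr1 C X X) (retr1 C (Cop C X X) X)"

abbreviation proj3_2 :: "'o \<Rightarrow> 'm" where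
  "proj3_2 X \<equiv> Cmp C (retr2 C X X) (retr1 C (Cop C X X) X)"

abbreviation proj3_3 :: "'o \<Rightarrow> 'm" where
  "proj3_3 X \<equiv> retr2 C (Cop C X X) X"

lemma proj3_in_Hom [simp]:
  "X \<in> Obj C \<Longrightarrow> proj3_1 X \<in> Hom C (cop3 X) X"
  "X \<in> Obj C \<Longrightarrow> proj3_2 X \<in> Hom C (cop3 X) X"
  by (simp_all add: Cmp_in_Hom[of "cop3 X" "Cop C X X" X])

end

lemma mem_cr3_iff:
  "c \<in> cr3 C FO FM X Y Z \<longleftrightarrow>
     c \<in> carrier (FO (Cop C (Cop C X Y) Z)) \<and>
     FM (Cop C (Cop C X Y) Z) (Cop C X Y) (retr1 C (Cop C X Y) Z) c = \<one>\<^bsub>FO (Cop C X Y)\<^esub> \<and>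
     FM (Cop C (Cop C X Y) Z) Z (retr2 C (Cop C X Y) Z) c = \<one>\<^bsub>FO Z\<^esub> \<and>
     FM (Cop C (Cop C X Y) Z) (Cop C X Z) (copmap C (Cop C X Y) Z X Z (retr1 C X Y) (Ident C Z)) c
       = \<one>\<^bsub>FO (Cop C X Z)\<^esub> \<and>
     FM (Cop C (Cop C X Y) Z) (Cop C Y Z) (copmap C (Cop C X Y) Z Y Z (retr2 C X Y) (Ident C Z)) c
       = \<one>\<^bsub>FO (Cop C Y Z)\<^esub>"
  by (auto simp: cr3_def cr2_def cr2_obj_def cr2_mor_def)

locale reduced_ab_functor = pointed_category C for C :: "('o,'m) pcc" +
  fixes FO :: "'o \<Rightarrow> 'g monoid"
    and FM :: "'o \<Rightarrow> 'o \<Rightarrow> 'm \<Rightarrow> 'g \<Rightarrow> 'g"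
  assumes ab_functor: "ab_functor C FO FM"
    and reduced: "carrier (FO (Zero C)) = {\<one>\<^bsub>FO (Zero C)\<^esub>}"
begin

lemma comm_group_FO: "X \<in> Obj C \<Longrightarrow> comm_group (FO X)"
  using ab_functor by (simp add: ab_functor_def)

lemma FM_group_hom:
  "\<lbrakk>X \<in> Obj C; Y \<in> Obj C; f \<in> Hom C X Y\<rbrakk> \<Longrightarrow> group_hom (FO X) (FO Y) (FM X Y f)"
  using ab_functor comm_group_FO
  by (simp add: ab_functor_def group_hom_def group_hom_axioms_def comm_group.axioms(2))

lemma FM_closed [simp]:
  "\<lbrakk>X \<in> Obj C; Y \<in> Obj C; f \<in> Hom C X Y; a \<in> carrier (FO X)\<rbrakk> \<Longrightarrow> FM X Y f a \<in> carrier (FO Y)"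
  by (rule group_hom.hom_closed[OF FM_group_hom])

lemma FM_mult:
  "\<lbrakk>X \<in> Obj C; Y \<in> Obj C; f \<in> Hom C X Y; a \<in> carrier (FO X); b \<in> carrier (FO X)\<rbrakk>
   \<Longrightarrow> FM X Y f (a \<otimes>\<^bsub>FO X\<^esub> b) = FM X Y f a \<otimes>\<^bsub>FO Y\<^esub> FM X Y f b"
  by (rule group_hom.hom_mult[OF FM_group_hom])

lemma FM_one [simp]:
  "\<lbrakk>X \<in> Obj C; Y \<in> Obj C; f \<in> Hom C X Y\<rbrakk> \<Longrightarrow> FM X Y f \<one>\<^bsub>FO X\<^esub> = \<one>\<^bsub>FO Y\<^esub>"
  by (rule group_hom.hom_one[OF FM_group_hom])

lemma FM_inv:
  "\<lbrakk>X \<in> Obj C; Y \<in> Obj C; f \<in> Hom C X Y; a \<in> carrier (FO X)\<rbrakk>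
   \<Longrightarrow> FM X Y f (inv\<^bsub>FO X\<^esub> a) = inv\<^bsub>FO Y\<^esub> FM X Y f a"
  by (rule group_hom.hom_inv[OF FM_group_hom])

lemma FM_Cmp:
  assumes "X \<in> Obj C" "Y \<in> Obj C" "Z \<in> Obj C" "f \<in> Hom C X Y" "g \<in> Hom C Y Z" "a \<in> carrier (FO X)"
  shows "FM Y Z g (FM X Y f a) = FM X Z (Cmp C g f) a"
proof -
  have "\<forall>X\<in>Obj C. \<forall>Y\<in>Obj C. \<forall>Z\<in>Obj C. \<forall>f\<in>Hom C X Y. \<forall>g\<in>Hom C Y Z.
      \<forall>a\<in>carrier (FO X). FM X Z (Cmp C g f) a = FM Y Z g (FM X Y f a)"
    using ab_functor unfolding ab_functor_def by (elim conjE)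
  with assms show ?thesis by simp
qed

lemma FM_zero_mor [simp]:
  assumes "X \<in> Obj C" "Y \<in> Obj C" "a \<in> carrier (FO X)"
  shows "FM X Y (zero_mor C X Y) a = \<one>\<^bsub>FO Y\<^esub>"
proof -
  have "FM X (Zero C) (to_Zero X) a = \<one>\<^bsub>FO (Zero C)\<^esub>"
    using assms reduced FM_closed[of X "Zero C" "to_Zero X" a] by auto
  then show ?thesis
    using assms by (simp add: zero_mor_eq FM_Cmp[of X "Zero C" Y, symmetric])
qed

lemma cr2_mult_closed:
  assumes "X \<in> Obj C" "Y \<in> Obj C" "a \<in> cr2 C FO FM X Y" "b \<in> cr2 C FO FM X Y"
  shows "a \<otimes>\<^bsub>FO (Cop C X Y)\<^esub> b \<in> cr2 C FO FM X Y"
proof -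
  interpret G: comm_group "FO (Cop C X Y)" using assms by (simp add: comm_group_FO)
  interpret G1: comm_group "FO X" using assms by (simp add: comm_group_FO)
  interpret G2: comm_group "FO Y" using assms by (simp add: comm_group_FO)
  show ?thesis
    using assms by (auto simp: cr2_def FM_mult)
qed

lemma fold2_decomposition:
  assumes X: "X \<in> Obj C" and y: "y \<in> carrier (FO (Cop C X X))"
  shows "\<exists>c\<in>cr2 C FO FM X X. FM (Cop C X X) X (fold2 C X) y
           = FM (Cop C X X) X (fold2 C X) c \<otimes>\<^bsub>FO X\<^esub>
             (FM (Cop C X X) X (retr1 C X X) y \<otimes>\<^bsub>FO X\<^esub> FM (Cop C X X) X (retr2 C X X) y)"
proof -
  let ?X2 = "Cop C X X"
  interpret G: comm_group "FO ?X2" using X by (simp add: comm_group_FO)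
  interpret H: comm_group "FO X" using X by (simp add: comm_group_FO)
  have e: "Cmp C (In1 C X X) (retr1 C X X) \<in> Hom C ?X2 ?X2" "Cmp C (In2 C X X) (retr2 C X X) \<in> Hom C ?X2 ?X2"
    using X by (simp_all add: Cmp_in_Hom[of ?X2 X ?X2])
  \<comment> \<open>remove from \<open>y\<close> its parts along the idempotents \<open>\<iota>\<^sub>k r\<^sub>k\<close> of \<open>X \<or> X\<close>\<close>
  define c where "c = y \<otimes>\<^bsub>FO ?X2\<^esub> inv\<^bsub>FO ?X2\<^esub> FM ?X2 ?X2 (Cmp C (In1 C X X) (retr1 C X X)) y
                       \<otimes>\<^bsub>FO ?X2\<^esub> inv\<^bsub>FO ?X2\<^esub> FM ?X2 ?X2 (Cmp C (In2 C X X) (retr2 C X X)) y"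
  have c_carrier: "c \<in> carrier (FO ?X2)"
    using X y e by (simp add: c_def)
  have FM_c: "FM ?X2 X h c = FM ?X2 X h y
      \<otimes>\<^bsub>FO X\<^esub> inv\<^bsub>FO X\<^esub> FM ?X2 X (Cmp C (Cmp C h (In1 C X X)) (retr1 C X X)) y
      \<otimes>\<^bsub>FO X\<^esub> inv\<^bsub>FO X\<^esub> FM ?X2 X (Cmp C (Cmp C h (In2 C X X)) (retr2 C X X)) y"
    if h: "h \<in> Hom C ?X2 X" for h
    using X y e h
    by (simp add: c_def FM_mult FM_inv FM_Cmp[of ?X2 ?X2 X] Cmp_assoc[of ?X2 X ?X2 X])
  have "FM ?X2 X (retr1 C X X) c = \<one>\<^bsub>FO X\<^esub>" "FM ?X2 X (retr2 C X X) c = \<one>\<^bsub>FO X\<^esub>"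
    using X y FM_c[of "retr1 C X X"] FM_c[of "retr2 C X X"]
    by (simp_all add: retr1_In1 retr1_In2 retr2_In1 retr2_In2
        Cmp_Ident_left[of ?X2 X] Cmp_zero_mor_right[of ?X2 X X] H.r_inv)
  then have "c \<in> cr2 C FO FM X X"
    using c_carrier by (simp add: cr2_def)
  moreover have "FM ?X2 X (fold2 C X) c = FM ?X2 X (fold2 C X) y
      \<otimes>\<^bsub>FO X\<^esub> inv\<^bsub>FO X\<^esub> (FM ?X2 X (retr1 C X X) y \<otimes>\<^bsub>FO X\<^esub> FM ?X2 X (retr2 C X X) y)"
    using X y FM_c[of "fold2 C X"]
    by (simp add: fold2_In1 fold2_In2 Cmp_Ident_left[of ?X2 X] H.inv_mult H.m_ac)
  then have "FM ?X2 X (fold2 C X) y = FM ?X2 X (fold2 C X) c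
      \<otimes>\<^bsub>FO X\<^esub> (FM ?X2 X (retr1 C X X) y \<otimes>\<^bsub>FO X\<^esub> FM ?X2 X (retr2 C X X) y)"
    using X y by (simp add: H.m_assoc)
  ultimately show ?thesis by blast
qed

lemma fold3_decomposition:
  assumes X: "X \<in> Obj C" and w: "w \<in> carrier (FO (cop3 X))"
  shows "\<exists>c\<in>cr2 C FO FM X X. FM (cop3 X) X (fold3 C X) w
           = FM (Cop C X X) X (fold2 C X) c \<otimes>\<^bsub>FO X\<^esub>
             (FM (cop3 X) X (proj3_1 X) w \<otimes>\<^bsub>FO X\<^esub>
              (FM (cop3 X) X (proj3_2 X) w \<otimes>\<^bsub>FO X\<^esub> FM (cop3 X) X (proj3_3 X) w))"
proof -
  let ?X2 = "Cop C X X" and ?q = "copmap C (Cop C X X) X X X (fold2 C X) (Ident C X)"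
  interpret H: comm_group "FO X" using X by (simp add: comm_group_FO)
  have q: "?q \<in> Hom C (cop3 X) ?X2"
    using X by simp
  define y where "y = FM (cop3 X) ?X2 ?q w"
  define y' where "y' = FM (cop3 X) ?X2 (retr1 C ?X2 X) w"
  have y: "y \<in> carrier (FO ?X2)" "y' \<in> carrier (FO ?X2)"
    using X w q by (simp_all add: y_def y'_def)
  have fold3_w: "FM (cop3 X) X (fold3 C X) w = FM ?X2 X (fold2 C X) y"
    using X w q by (simp add: y_def fold3_eq FM_Cmp)
  obtain c1 where c1: "c1 \<in> cr2 C FO FM X X"
    and eq1: "FM ?X2 X (fold2 C X) y = FM ?X2 X (fold2 C X) c1 \<otimes>\<^bsub>FO X\<^esub>
           (FM ?X2 X (retr1 C X X) y \<otimes>\<^bsub>FO X\<^esub> FM ?X2 X (retr2 C X X) y)"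
    using fold2_decomposition[OF X y(1)] by blast
  have retr1_y: "FM ?X2 X (retr1 C X X) y = FM ?X2 X (fold2 C X) y'"
    using X w q by (simp add: y_def y'_def FM_Cmp retr1_copmap)
  obtain c2 where c2: "c2 \<in> cr2 C FO FM X X"
    and "FM ?X2 X (fold2 C X) y' = FM ?X2 X (fold2 C X) c2 \<otimes>\<^bsub>FO X\<^esub>
           (FM ?X2 X (retr1 C X X) y' \<otimes>\<^bsub>FO X\<^esub> FM ?X2 X (retr2 C X X) y')"
    using fold2_decomposition[OF X y(2)] by blast
  moreover have "FM ?X2 X (retr1 C X X) y' = FM (cop3 X) X (proj3_1 X) w"
    "FM ?X2 X (retr2 C X X) y' = FM (cop3 X) X (proj3_2 X) w"
    using X w by (simp_all add: y'_def FM_Cmp)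
  moreover have "FM ?X2 X (retr2 C X X) y = FM (cop3 X) X (proj3_3 X) w"
    using X w q by (simp add: y_def FM_Cmp retr2_copmap Cmp_Ident_left[of "cop3 X" X])
  ultimately have "FM (cop3 X) X (fold3 C X) w = FM ?X2 X (fold2 C X) c1 \<otimes>\<^bsub>FO X\<^esub>
      (FM ?X2 X (fold2 C X) c2 \<otimes>\<^bsub>FO X\<^esub> (FM (cop3 X) X (proj3_1 X) w \<otimes>\<^bsub>FO X\<^esub>
       FM (cop3 X) X (proj3_2 X) w) \<otimes>\<^bsub>FO X\<^esub> FM (cop3 X) X (proj3_3 X) w)"
    using fold3_w eq1 retr1_y by simp
  also have "\<dots> = FM ?X2 X (fold2 C X) (c1 \<otimes>\<^bsub>FO ?X2\<^esub> c2) \<otimes>\<^bsub>FO X\<^esub>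
      (FM (cop3 X) X (proj3_1 X) w \<otimes>\<^bsub>FO X\<^esub>
       (FM (cop3 X) X (proj3_2 X) w \<otimes>\<^bsub>FO X\<^esub> FM (cop3 X) X (proj3_3 X) w))"
    using X w c1 c2 by (simp add: FM_mult cr2_def H.m_assoc)
  finally show ?thesis
    using X c1 c2 cr2_mult_closed by blast
qed

lemma fold2_image_cr2_mult_closed:
  assumes X: "X \<in> Obj C"
    and "a \<in> FM (Cop C X X) X (fold2 C X) ` cr2 C FO FM X X"
    and "b \<in> FM (Cop C X X) X (fold2 C X) ` cr2 C FO FM X X"
  shows "a \<otimes>\<^bsub>FO X\<^esub> b \<in> FM (Cop C X X) X (fold2 C X) ` cr2 C FO FM X X"
proof -
  obtain c d where c: "c \<in> cr2 C FO FM X X" and d: "d \<in> cr2 C FO FM X X"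
    and "a = FM (Cop C X X) X (fold2 C X) c" "b = FM (Cop C X X) X (fold2 C X) d"
    using assms by blast
  then have "a \<otimes>\<^bsub>FO X\<^esub> b = FM (Cop C X X) X (fold2 C X) (c \<otimes>\<^bsub>FO (Cop C X X)\<^esub> d)"
    using X by (simp add: FM_mult cr2_def)
  moreover have "c \<otimes>\<^bsub>FO (Cop C X X)\<^esub> d \<in> cr2 C FO FM X X"
    using X c d by (simp add: cr2_mult_closed)
  ultimately show ?thesis by blast
qed

lemma K2_mult_closed:
  assumes X: "X \<in> Obj C" and "a \<in> K2 C FO FM X" "b \<in> K2 C FO FM X"
  shows "a \<otimes>\<^bsub>FO X\<^esub> b \<in> K2 C FO FM X"
proof -
  interpret G3: comm_group "FO (cop3 X)" using X by (simp add: comm_group_FO)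
  interpret G2: comm_group "FO (Cop C X X)" using X by (simp add: comm_group_FO)
  interpret G1: comm_group "FO X" using X by (simp add: comm_group_FO)
  obtain c d where c: "c \<in> cr3 C FO FM X X X" and d: "d \<in> cr3 C FO FM X X X"
    and ab: "a = FM (cop3 X) X (fold3 C X) c" "b = FM (cop3 X) X (fold3 C X) d"
    using assms by (auto simp: K2_def cube_def)
  have "c \<otimes>\<^bsub>FO (cop3 X)\<^esub> d \<in> cr3 C FO FM X X X"
    using X c d by (simp add: mem_cr3_iff FM_mult)
  moreover have "a \<otimes>\<^bsub>FO X\<^esub> b = FM (cop3 X) X (fold3 C X) (c \<otimes>\<^bsub>FO (cop3 X)\<^esub> d)"
    using X c d ab by (simp add: FM_mult mem_cr3_iff)
  ultimately show ?thesis
    by (auto simp: K2_def cube_def)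
qed

end

locale bireduced_bifunctor = pointed_category C for C :: "('o,'m) pcc" +
  fixes BO :: "'o \<Rightarrow> 'o \<Rightarrow> 'g monoid"
    and BM :: "'o \<Rightarrow> 'o \<Rightarrow> 'o \<Rightarrow> 'o \<Rightarrow> 'm \<Rightarrow> 'm \<Rightarrow> 'g \<Rightarrow> 'g"
  assumes ab_bifunctor: "ab_bifunctor C BO BM"
    and bireduced: "bireduced C BO"
begin

lemma comm_group_BO: "\<lbrakk>X \<in> Obj C; Y \<in> Obj C\<rbrakk> \<Longrightarrow> comm_group (BO X Y)"
  using ab_bifunctor by (simp add: ab_bifunctor_def)

lemma BM_hom:
  "\<lbrakk>X \<in> Obj C; Y \<in> Obj C; X' \<in> Obj C; Y' \<in> Obj C; f \<in> Hom C X X'; g \<in> Hom C Y Y'\<rbrakk>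
   \<Longrightarrow> BM X Y X' Y' f g \<in> hom (BO X Y) (BO X' Y')"
  using ab_bifunctor unfolding ab_bifunctor_def by blast

lemma BM_Ident: "\<lbrakk>X \<in> Obj C; Y \<in> Obj C; a \<in> carrier (BO X Y)\<rbrakk> \<Longrightarrow> BM X Y X Y (Ident C X) (Ident C Y) a = a"
  using ab_bifunctor unfolding ab_bifunctor_def by blast

lemma BM_Cmp:
  assumes "X \<in> Obj C" "Y \<in> Obj C" "X' \<in> Obj C" "Y' \<in> Obj C" "X'' \<in> Obj C" "Y'' \<in> Obj C"
    and "f \<in> Hom C X X'" "g \<in> Hom C Y Y'" "f' \<in> Hom C X' X''" "g' \<in> Hom C Y' Y''"
    and "a \<in> carrier (BO X Y)"
  shows "BM X' Y' X'' Y'' f' g' (BM X Y X' Y' f g a) = BM X Y X'' Y'' (Cmp C f' f) (Cmp C g' g) a"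
proof -
  have "\<forall>X\<in>Obj C. \<forall>Y\<in>Obj C. \<forall>X'\<in>Obj C. \<forall>Y'\<in>Obj C. \<forall>X''\<in>Obj C. \<forall>Y''\<in>Obj C.
      \<forall>f\<in>Hom C X X'. \<forall>g\<in>Hom C Y Y'. \<forall>f'\<in>Hom C X' X''. \<forall>g'\<in>Hom C Y' Y''.
      \<forall>a\<in>carrier (BO X Y).
        BM X Y X'' Y'' (Cmp C f' f) (Cmp C g' g) a = BM X' Y' X'' Y'' f' g' (BM X Y X' Y' f g a)"
    using ab_bifunctor unfolding ab_bifunctor_def by (elim conjE)
  with assms show ?thesis by simp
qed

lemma BM_closed [simp]:
  "\<lbrakk>X \<in> Obj C; Y \<in> Obj C; X' \<in> Obj C; Y' \<in> Obj C; f \<in> Hom C X X'; g \<in> Hom C Y Y'; a \<in> carrier (BO X Y)\<rbrakk>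
   \<Longrightarrow> BM X Y X' Y' f g a \<in> carrier (BO X' Y')"
  by (rule hom_in_carrier[OF BM_hom])

lemma BM_one [simp]:
  "\<lbrakk>X \<in> Obj C; Y \<in> Obj C; X' \<in> Obj C; Y' \<in> Obj C; f \<in> Hom C X X'; g \<in> Hom C Y Y'\<rbrakk>
   \<Longrightarrow> BM X Y X' Y' f g \<one>\<^bsub>BO X Y\<^esub> = \<one>\<^bsub>BO X' Y'\<^esub>"
  using hom_one[OF BM_hom] comm_group_BO comm_group.axioms(2) by metis

lemma reduced_ab_functor_left_slice:
  "Y \<in> Obj C \<Longrightarrow> reduced_ab_functor C (\<lambda>W. BO W Y) (\<lambda>W W' f. BM W Y W' Y f (Ident C Y))"
  using pointed_cat_fin_coprod bireduced
  by unfold_locales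
     (auto simp: ab_functor_def comm_group_BO BM_hom BM_Ident BM_Cmp bireduced_def)

lemma reduced_ab_functor_right_slice:
  "X \<in> Obj C \<Longrightarrow> reduced_ab_functor C (\<lambda>W. BO X W) (\<lambda>W W' g. BM X W X W' (Ident C X) g)"
  using pointed_cat_fin_coprod bireduced
  by unfold_locales
     (auto simp: ab_functor_def comm_group_BO BM_hom BM_Ident BM_Cmp bireduced_def)

lemma reduced_ab_functor_diag: "reduced_ab_functor C (diagO BO) (diagM BM)"
  using pointed_cat_fin_coprod bireduced
  by unfold_locales
     (auto simp: ab_functor_def diagO_def diagM_def comm_group_BO BM_hom BM_Ident BM_Cmp[symmetric] bireduced_def)

lemma K2_diag_eq:
  "K2 C (diagO BO) (diagM BM) X
     = (\<lambda>c. BM (cop3 X) (cop3 X) X X (fold3 C X) (fold3 C X) c) ` cr3 C (diagO BO) (diagM BM) X X X"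
  by (simp add: K2_def cube_def diagM_def)

lemma N1_subset_K2:
  assumes X: "X \<in> Obj C"
  shows "N1 C BO BM X X \<subseteq> K2 C (diagO BO) (diagM BM) X"
proof
  fix n assume "n \<in> N1 C BO BM X X"
  then obtain a where a: "a \<in> cr2 C (\<lambda>W. BO W X) (\<lambda>W W' f. BM W X W' X f (Ident C X)) X X"
    and n: "n = BM (Cop C X X) X X X (fold2 C X) (Ident C X) a"
    unfolding N1_def by blast
  let ?X2 = "Cop C X X" and ?j = "In1 C (Cop C X X) X" and ?i = "In2 C (Cop C X X) X"
  interpret L: reduced_ab_functor C "\<lambda>W. BO W X" "\<lambda>W W' f. BM W X W' X f (Ident C X)"
    by (rule reduced_ab_functor_left_slice[OF X])
  interpret R: reduced_ab_functor C "\<lambda>W. BO ?X2 W" "\<lambda>W W' g. BM ?X2 W ?X2 W' (Ident C ?X2) g"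
    using X by (intro reduced_ab_functor_right_slice) simp
  have a_carrier: "a \<in> carrier (BO ?X2 X)"
    and a_retr: "BM ?X2 X X X (retr1 C X X) (Ident C X) a = \<one>\<^bsub>BO X X\<^esub>"
                "BM ?X2 X X X (retr2 C X X) (Ident C X) a = \<one>\<^bsub>BO X X\<^esub>"
    using a by (simp_all add: cr2_def)
  define c where "c = BM ?X2 X (cop3 X) (cop3 X) ?j ?i a"
  have BM_c: "BM (cop3 X) (cop3 X) Y Y f f c = BM ?X2 X Y Y (Cmp C f ?j) (Cmp C f ?i) a"
    if "Y \<in> Obj C" "f \<in> Hom C (cop3 X) Y" for Y f
    using X that a_carrier by (simp add: c_def BM_Cmp)
  have copmap_vanish: "BM ?X2 X ?X2 ?X2 (Cmp C (In1 C X X) r) (Cmp C (In2 C X X) (Ident C X)) a = \<one>\<^bsub>BO ?X2 ?X2\<^esub>"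
    if "r \<in> Hom C ?X2 X" "BM ?X2 X X X r (Ident C X) a = \<one>\<^bsub>BO X X\<^esub>" for r
    using X that a_carrier by (simp add: BM_Cmp[symmetric])
  have "c \<in> cr3 C (diagO BO) (diagM BM) X X X"
    unfolding mem_cr3_iff diagO_def diagM_def
    using X a_carrier a_retr BM_c copmap_vanish
    by (simp add: c_def retr1_In1 retr1_In2 retr2_In1 retr2_In2 copmap_In1 copmap_In2 R.FM_zero_mor)
  moreover have "n = BM (cop3 X) (cop3 X) X X (fold3 C X) (fold3 C X) c"
    using X BM_c[of X "fold3 C X"] by (simp add: n fold3_In1 fold3_In2)
  ultimately show "n \<in> K2 C (diagO BO) (diagM BM) X"
    by (simp add: K2_diag_eq)
qed

lemma cr3_diag_vanishes_on_projections:
  assumes X: "X \<in> Obj C" and c: "c \<in> cr3 C (diagO BO) (diagM BM) X X X"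
    and p: "p \<in> {proj3_1 X, proj3_2 X, proj3_3 X}" and q: "q \<in> {proj3_1 X, proj3_2 X, proj3_3 X}"
  shows "BM (cop3 X) (cop3 X) X X p q c = \<one>\<^bsub>BO X X\<^esub>"
proof -
  let ?X2 = "Cop C X X"
  let ?s1 = "copmap C ?X2 X X X (retr1 C X X) (Ident C X)"
  let ?s2 = "copmap C ?X2 X X X (retr2 C X X) (Ident C X)"
  have c_carrier: "c \<in> carrier (BO (cop3 X) (cop3 X))"
    and vanish: "BM (cop3 X) (cop3 X) ?X2 ?X2 (retr1 C ?X2 X) (retr1 C ?X2 X) c = \<one>\<^bsub>BO ?X2 ?X2\<^esub>"
                "BM (cop3 X) (cop3 X) ?X2 ?X2 ?s1 ?s1 c = \<one>\<^bsub>BO ?X2 ?X2\<^esub>"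
                "BM (cop3 X) (cop3 X) ?X2 ?X2 ?s2 ?s2 c = \<one>\<^bsub>BO ?X2 ?X2\<^esub>"
    using c by (simp_all add: mem_cr3_iff diagO_def diagM_def)
  have through: "BM (cop3 X) (cop3 X) X X (Cmp C a s) (Cmp C b s) c = \<one>\<^bsub>BO X X\<^esub>"
    if "s \<in> Hom C (cop3 X) ?X2" "a \<in> Hom C ?X2 X" "b \<in> Hom C ?X2 X"
      "BM (cop3 X) (cop3 X) ?X2 ?X2 s s c = \<one>\<^bsub>BO ?X2 ?X2\<^esub>" for s a b
    using X that c_carrier BM_Cmp[of "cop3 X" "cop3 X" ?X2 ?X2 X X s s a b c] by simp
  have s1: "proj3_1 X = Cmp C (retr1 C X X) ?s1" "proj3_3 X = Cmp C (retr2 C X X) ?s1"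
    using X by (simp_all add: retr1_copmap retr2_copmap Cmp_Ident_left[of "cop3 X" X])
  have s2: "proj3_2 X = Cmp C (retr1 C X X) ?s2" "proj3_3 X = Cmp C (retr2 C X X) ?s2"
    using X by (simp_all add: retr1_copmap retr2_copmap Cmp_Ident_left[of "cop3 X" X])
  consider "p \<in> {proj3_1 X, proj3_2 X}" "q \<in> {proj3_1 X, proj3_2 X}"
    | "p \<in> {proj3_1 X, proj3_3 X}" "q \<in> {proj3_1 X, proj3_3 X}"
    | "p \<in> {proj3_2 X, proj3_3 X}" "q \<in> {proj3_2 X, proj3_3 X}"
    using p q by blast
  then show ?thesis
  proof cases
    case 1
    then show ?thesis using X vanish(1) through[of "retr1 C ?X2 X"] by auto
  next
    case 2
    then show ?thesis using X vanish(2) through[of ?s1] unfolding s1 by auto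
  next
    case 3
    then show ?thesis using X vanish(3) through[of ?s2] unfolding s2 by auto
  qed
qed

lemma BM_projection_fold3_in_N2:
  assumes X: "X \<in> Obj C" and c: "c \<in> cr3 C (diagO BO) (diagM BM) X X X"
    and p: "p \<in> {proj3_1 X, proj3_2 X, proj3_3 X}"
  shows "BM (cop3 X) (cop3 X) X X p (fold3 C X) c \<in> N2 C BO BM X X"
proof -
  interpret R: reduced_ab_functor C "\<lambda>W. BO X W" "\<lambda>W W' g. BM X W X W' (Ident C X) g"
    by (rule reduced_ab_functor_right_slice[OF X])
  interpret H: comm_group "BO X X" using X by (simp add: comm_group_BO)
  have c_carrier: "c \<in> carrier (BO (cop3 X) (cop3 X))"
    using c by (simp add: mem_cr3_iff diagO_def)
  have p_Hom: "p \<in> Hom C (cop3 X) X"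
    using X p by auto
  define v where "v = BM (cop3 X) (cop3 X) X (cop3 X) p (Ident C (cop3 X)) c"
  have v: "v \<in> carrier (BO X (cop3 X))"
    using X p_Hom c_carrier by (simp add: v_def)
  have BM_v: "BM X (cop3 X) X X (Ident C X) q v = BM (cop3 X) (cop3 X) X X p q c"
    if "q \<in> Hom C (cop3 X) X" for q
    using X that p_Hom c_carrier
    by (simp add: v_def BM_Cmp Cmp_Ident_left[of "cop3 X" X] Cmp_Ident_right[of "cop3 X" X])
  obtain d where d: "d \<in> cr2 C (\<lambda>W. BO X W) (\<lambda>W W' g. BM X W X W' (Ident C X) g) X X"
    and "BM X (cop3 X) X X (Ident C X) (fold3 C X) v
       = BM X (Cop C X X) X X (Ident C X) (fold2 C X) d \<otimes>\<^bsub>BO X X\<^esub>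
         (BM X (cop3 X) X X (Ident C X) (proj3_1 X) v \<otimes>\<^bsub>BO X X\<^esub>
          (BM X (cop3 X) X X (Ident C X) (proj3_2 X) v \<otimes>\<^bsub>BO X X\<^esub>
           BM X (cop3 X) X X (Ident C X) (proj3_3 X) v))"
    using R.fold3_decomposition[OF X v] by blast
  then have "BM (cop3 X) (cop3 X) X X p (fold3 C X) c = BM X (Cop C X X) X X (Ident C X) (fold2 C X) d"
    using X c p d BM_v cr3_diag_vanishes_on_projections by (simp add: cr2_def)
  with d show ?thesis
    unfolding N2_def by blast
qed

lemma K2_subset_N12:
  assumes X: "X \<in> Obj C"
  shows "K2 C (diagO BO) (diagM BM) X \<subseteq> N12 C BO BM X X"
proof
  fix k assume "k \<in> K2 C (diagO BO) (diagM BM) X"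
  then obtain c where c: "c \<in> cr3 C (diagO BO) (diagM BM) X X X"
    and k: "k = BM (cop3 X) (cop3 X) X X (fold3 C X) (fold3 C X) c"
    by (auto simp: K2_diag_eq)
  interpret L: reduced_ab_functor C "\<lambda>W. BO W X" "\<lambda>W W' f. BM W X W' X f (Ident C X)"
    by (rule reduced_ab_functor_left_slice[OF X])
  interpret R: reduced_ab_functor C "\<lambda>W. BO X W" "\<lambda>W W' g. BM X W X W' (Ident C X) g"
    by (rule reduced_ab_functor_right_slice[OF X])
  have c_carrier: "c \<in> carrier (BO (cop3 X) (cop3 X))"
    using c by (simp add: mem_cr3_iff diagO_def)
  define w where "w = BM (cop3 X) (cop3 X) (cop3 X) X (Ident C (cop3 X)) (fold3 C X) c"
  have w: "w \<in> carrier (BO (cop3 X) X)"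
    using X c_carrier by (simp add: w_def)
  have BM_w: "BM (cop3 X) X X X p (Ident C X) w = BM (cop3 X) (cop3 X) X X p (fold3 C X) c"
    if "p \<in> Hom C (cop3 X) X" for p
    using X that c_carrier
    by (simp add: w_def BM_Cmp Cmp_Ident_left[of "cop3 X" X] Cmp_Ident_right[of "cop3 X" X])
  obtain c1 where c1: "c1 \<in> cr2 C (\<lambda>W. BO W X) (\<lambda>W W' f. BM W X W' X f (Ident C X)) X X"
    and "BM (cop3 X) X X X (fold3 C X) (Ident C X) w
       = BM (Cop C X X) X X X (fold2 C X) (Ident C X) c1 \<otimes>\<^bsub>BO X X\<^esub>
         (BM (cop3 X) X X X (proj3_1 X) (Ident C X) w \<otimes>\<^bsub>BO X X\<^esub>
          (BM (cop3 X) X X X (proj3_2 X) (Ident C X) w \<otimes>\<^bsub>BO X X\<^esub>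
           BM (cop3 X) X X X (proj3_3 X) (Ident C X) w))"
    using L.fold3_decomposition[OF X w] by blast
  then have "k = BM (Cop C X X) X X X (fold2 C X) (Ident C X) c1 \<otimes>\<^bsub>BO X X\<^esub>
      (BM (cop3 X) (cop3 X) X X (proj3_1 X) (fold3 C X) c \<otimes>\<^bsub>BO X X\<^esub>
       (BM (cop3 X) (cop3 X) X X (proj3_2 X) (fold3 C X) c \<otimes>\<^bsub>BO X X\<^esub>
        BM (cop3 X) (cop3 X) X X (proj3_3 X) (fold3 C X) c))"
    using X by (simp add: k BM_w)
  moreover have "BM (Cop C X X) X X X (fold2 C X) (Ident C X) c1 \<in> N1 C BO BM X X"
    using c1 unfolding N1_def by blast
  moreover have "BM (cop3 X) (cop3 X) X X (proj3_1 X) (fold3 C X) c \<otimes>\<^bsub>BO X X\<^esub>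
       (BM (cop3 X) (cop3 X) X X (proj3_2 X) (fold3 C X) c \<otimes>\<^bsub>BO X X\<^esub>
        BM (cop3 X) (cop3 X) X X (proj3_3 X) (fold3 C X) c) \<in> N2 C BO BM X X"
    using X c BM_projection_fold3_in_N2 R.fold2_image_cr2_mult_closed unfolding N2_def by simp
  ultimately show "k \<in> N12 C BO BM X X"
    unfolding N12_def set_mult_def by blast
qed

lemma bireduced_bifunctor_swap:
  "bireduced_bifunctor C (\<lambda>X Y. BO Y X) (\<lambda>X Y X' Y' f g. BM Y X Y' X' g f)"
  using pointed_cat_fin_coprod bireduced
  by unfold_locales
     (auto simp: ab_bifunctor_def comm_group_BO BM_hom BM_Ident BM_Cmp bireduced_def)

lemma N2_subset_K2:
  assumes X: "X \<in> Obj C"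
  shows "N2 C BO BM X X \<subseteq> K2 C (diagO BO) (diagM BM) X"
proof -
  interpret S: bireduced_bifunctor C "\<lambda>X Y. BO Y X" "\<lambda>X Y X' Y' f g. BM Y X Y' X' g f"
    by (rule bireduced_bifunctor_swap)
  have "diagO (\<lambda>X Y. BO Y X) = diagO BO" "diagM (\<lambda>X Y X' Y' f g. BM Y X Y' X' g f) = diagM BM"
    by (simp_all add: diagO_def diagM_def)
  moreover have "N1 C (\<lambda>X Y. BO Y X) (\<lambda>X Y X' Y' f g. BM Y X Y' X' g f) X X = N2 C BO BM X X"
    by (simp add: N1_def N2_def)
  ultimately show ?thesis
    using S.N1_subset_K2[OF X] by simp
qed

lemma K2_diag_eq_N12:
  assumes X: "X \<in> Obj C"
  shows "K2 C (diagO BO) (diagM BM) X = N12 C BO BM X X"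
proof
  interpret D: reduced_ab_functor C "diagO BO" "diagM BM"
    by (rule reduced_ab_functor_diag)
  show "N12 C BO BM X X \<subseteq> K2 C (diagO BO) (diagM BM) X"
    using X N1_subset_K2 N2_subset_K2 D.K2_mult_closed
    unfolding N12_def set_mult_def by (fastforce simp: diagO_def)
qed (rule K2_subset_N12[OF X])

lemma T2_diag_eq_T11: "X \<in> Obj C \<Longrightarrow> T2 C (diagO BO) (diagM BM) X = T11 C BO BM X X"
  by (simp add: T2_def T11_def K2_diag_eq_N12) (simp add: diagO_def)

lemma t2_diag_eq_t11: "X \<in> Obj C \<Longrightarrow> t2 C (diagO BO) (diagM BM) X = t11 C BO BM X X"
  by (simp add: t2_def t11_def K2_diag_eq_N12 fun_eq_iff) (simp add: diagO_def)

lemma T2_mor_diag_eq_T11_mor: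
  "Y \<in> Obj C \<Longrightarrow> T2_mor C (diagO BO) (diagM BM) X Y f = T11_mor C BO BM X X Y Y f f"
  by (simp add: T2_mor_def T11_mor_def t2_diag_eq_t11 fun_eq_iff) (simp add: diagM_def)

end

theorem proposition2p7:
  fixes C :: "('o,'m) pcc"
    and BO :: "'o \<Rightarrow> 'o \<Rightarrow> 'g monoid"
    and BM :: "'o \<Rightarrow> 'o \<Rightarrow> 'o \<Rightarrow> 'o \<Rightarrow> 'm \<Rightarrow> 'm \<Rightarrow> 'g \<Rightarrow> 'g"
  assumes "pointed_cat_fin_coprod C"
    and "ab_bifunctor C BO BM"
    and "bireduced C BO"
  shows "\<exists>\<phi>.
    (\<forall>X\<in>Obj C.
       \<phi> X \<in> iso (T2 C (diagO BO) (diagM BM) X) (T11 C BO BM X X) \<and>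
       (\<forall>a\<in>carrier (BO X X). \<phi> X (t2 C (diagO BO) (diagM BM) X a) = t11 C BO BM X X a)) \<and>
    (\<forall>X\<in>Obj C. \<forall>Y\<in>Obj C. \<forall>f\<in>Hom C X Y.
       \<forall>K\<in>carrier (T2 C (diagO BO) (diagM BM) X).
         \<phi> Y (T2_mor C (diagO BO) (diagM BM) X Y f K)
           = T11_mor C BO BM X X Y Y f f (\<phi> X K))"
proof -
  interpret bireduced_bifunctor C BO BM
    using assms by unfold_locales
  show ?thesis
    by (rule exI[of _ "\<lambda>X. id"])
       (simp add: T2_diag_eq_T11 t2_diag_eq_t11 T2_mor_diag_eq_T11_mor id_iso)
qed

end
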